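(* For every $j\in\{1,\dots,D\}$, $$ r_{n,j}=\frac{D^{s-1}(3Dn+1)!}{n!^{3D}}\sum_{m=1}^D\xi^{-mj}r_{n,m}^*, $$ where $$ r_{n,m}^* =\xi^m\int\!\cdots\!\int\limits_{[0,1]^{s+1}} \frac{\prod_{i=0}^sx_i^{Dn}(1-x_i^D)^n\,\d x_i}{(1-\xi^mx_0\dotsb x_s)^{3Dn+2}} =\int_0^{\xi^m}\!\!\int\!\cdots\!\int\limits_{[0,1]^s} \frac{\prod_{i=0}^sx_i^{Dn}(1-x_i^D)^n\,\d x_i}{(1-x_0\dotsb x_s)^{3Dn+2}} $$ and $\xi=\xi_D$ denotes a primitive root of unity of degree $D$.
   Context: Let $s$ and $D$ be positive integers with $s\ge 3D-1$, and let $n$ be a positive even integer. Let $\zeta(s,\alpha)=\sum_{k=0}^\infty (k+\alpha)^{-s}$ denote the Hurwitz zeta function. For $j\in\{1,\dots,D\}$ define $$ r_{n,j} = \sum_{m=1}^\infty R_n\bigg(m+\frac{j}{D}\bigg), \qquad\text{where}\quad R_n(t) = D^{3Dn} n!^{s+1-3D} \, \frac{ \prod_{l=0}^{3Dn} (t-n+l/D)}{ \prod_{l=0}^n (t+l)^{s+1}}. $$ These are linear forms $r_{n,j}=a_{0,j}+\sum_{2\le i\le s,\ i\equiv s \ (\mathrm{mod}\ 2)} a_i\,\zeta(i,j/D)$ with rational coefficients. *)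

theory Defs
  imports "HOL-Analysis.Analysis" "HOL-Complex_Analysis.Complex_Analysis"
begin

text \<open>The rational function R_n(t) (depending on parameters s, D, n).
  The exponent s+1-3D is nonnegative under the standing hypothesis s \<ge> 3D-1.\<close>
definition R_fun :: "nat \<Rightarrow> nat \<Rightarrow> nat \<Rightarrow> real \<Rightarrow> real" where
  "R_fun s D n t =
     real D ^ (3*D*n) * fact n ^ (s + 1 - 3*D)
     * (\<Prod>l\<in>{0..3*D*n}. t - real n + real l / real D)
     / (\<Prod>l\<in>{0..n}. (t + real l) ^ (s+1))"

definition r_lin :: "nat \<Rightarrow> nat \<Rightarrow> nat \<Rightarrow> nat \<Rightarrow> real" where
  "r_lin s D n j = (\<Sum>m. R_fun s D n (real (Suc m) + real j / real D))"

definition weight :: "nat \<Rightarrow> nat \<Rightarrow> nat set \<Rightarrow> (nat \<Rightarrow> real) \<Rightarrow> real" where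
  "weight D n I x = (\<Prod>i\<in>I. x i ^ (D*n) * (1 - x i ^ D) ^ n)"

definition r_star :: "nat \<Rightarrow> nat \<Rightarrow> nat \<Rightarrow> complex \<Rightarrow> nat \<Rightarrow> complex" where
  "r_star s D n \<xi> m = \<xi> ^ m *
     (LINT x | (\<Pi>\<^sub>M i\<in>{..s}. restrict_space lborel {0..1::real}).
        complex_of_real (weight D n {..s} x)
        / (1 - \<xi> ^ m * complex_of_real (\<Prod>i\<in>{..s}. x i)) ^ (3*D*n+2))"

definition r_star_contour :: "nat \<Rightarrow> nat \<Rightarrow> nat \<Rightarrow> complex \<Rightarrow> nat \<Rightarrow> complex" where
  "r_star_contour s D n \<xi> m = contour_integral (linepath 0 (\<xi> ^ m))
     (\<lambda>z. LINT x | (\<Pi>\<^sub>M i\<in>{1..s}. restrict_space lborel {0..1::real}).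
        z ^ (D*n) * (1 - z ^ D) ^ n * complex_of_real (weight D n {1..s} x)
        / (1 - z * complex_of_real (\<Prod>i\<in>{1..s}. x i)) ^ (3*D*n+2))"

end

theory Submission
  imports Defs
begin

text \<open>
  Expand the kernel (1 - w x_0 ... x_s)^-(3Dn+2) in its negative binomial series and integrate
  termwise over the cube. Since the weight is a product, the k-th term is
  binom(k + 3Dn + 1, 3Dn + 1) w^k J_k^(s+1), where, by the recursion
  J(n+1, p) = J(n, p) - J(n, p + D) for J(n, p) = int_0^1 y^p (1 - y^D)^n dy,
  J_k = J(n, Dn + k) = n! / (D t (t+1) ... (t+n)) with t = n + (k+1)/D; and D^s (3Dn+1)! / n!^(3D)
  times this coefficient is exactly R_n(t). For w = xi^m, averaging over m with weights
  xi^(-mj) keeps only the terms with k = Dq + j - 1 and leaves sum_q R_n(q + n + j/D), which is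
  r_(n,j) because R_n vanishes at m + j/D for 1 <= m < n. The contour form of r*_(n,m) follows
  from Fubini in x_0 and the substitution x_0 = t xi^m, using xi^(mD) = 1.
\<close>

lemma negative_binomial_sums:
  fixes u :: complex
  assumes "norm u < 1"
  shows "(\<lambda>k. of_nat ((k + N) choose N) * u ^ k) sums (1 / (1 - u) ^ Suc N)"
proof -
  have "(\<lambda>k. (- (of_nat N + 1) gchoose k) * (- u) ^ k) sums (1 + - u) powr (- (of_nat N + 1))"
    by (rule gen_binomial_complex) (use assms in simp)
  moreover have "(- (of_nat N + 1) gchoose k) * (- u) ^ k = of_nat ((k + N) choose N) * u ^ k" for k
  proof -
    have "(- (of_nat N + 1) gchoose k) = (-1) ^ k * (of_nat (N + k) gchoose k :: complex)"
      using gbinomial_minus[of "of_nat N + 1 :: complex" k] by (simp add: add_ac)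
    also have "(of_nat (N + k) gchoose k :: complex) = of_nat ((k + N) choose N)"
      using binomial_symmetric[of k "N + k"]
      by (simp add: binomial_gbinomial[symmetric] add.commute del: of_nat_add)
    finally show ?thesis by (simp add: power_minus')
  qed
  moreover have "(1 + - u) powr (- (of_nat N + 1)) = 1 / (1 - u) ^ Suc N"
  proof -
    have e: "(- (of_nat N + 1) :: complex) = of_int (- int (Suc N))" by simp
    have "(1 + - u) powr (- (of_nat N + 1)) = (1 - u) powr of_int (- int (Suc N))"
      by (subst e) simp
    also have "\<dots> = (1 - u) powi (- int (Suc N))"
      by (rule complex_powr_of_int) (use assms in auto)
    also have "\<dots> = 1 / (1 - u) ^ Suc N"
      by (simp only: power_int_minus power_int_of_nat inverse_eq_divide)
    finally show ?thesis .
  qed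
  ultimately show ?thesis by simp
qed

abbreviation lborel_01 :: "real measure" where
  "lborel_01 \<equiv> restrict_space lborel {0..1}"

lemma integrable_lborel_01_continuous:
  fixes f :: "real \<Rightarrow> 'a::{banach,second_countable_topology}"
  assumes "continuous_on {0..1} f"
  shows "integrable lborel_01 f"
  using borel_integrable_atLeastAtMost'[OF assms]
  unfolding set_integrable_def by (subst integrable_restrict_space) auto

lemma integral_lborel_01_power: "(LINT y|lborel_01. y ^ p) = 1 / (real p + 1)"
  by (subst integral_restrict_space) (auto simp: integral_power mult.commute)

lemma has_integral_lborel_01:
  fixes h :: "real \<Rightarrow> 'a::euclidean_space"
  assumes "integrable lborel_01 h"
  shows "(h has_integral (LINT t|lborel_01. h t)) {0..1}"
proof -
  have h: "set_integrable lborel {0..1} h"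
    using assms unfolding set_integrable_def by (subst (asm) integrable_restrict_space) auto
  have "(LINT t|lborel_01. h t) = (LINT t:{0..1}|lborel. h t)"
    unfolding set_lebesgue_integral_def by (subst integral_restrict_space) auto
  then show ?thesis
    using set_borel_integral_eq_integral[OF h] by (simp add: integrable_integral)
qed

definition beta_moment :: "nat \<Rightarrow> nat \<Rightarrow> nat \<Rightarrow> real" where
  "beta_moment D n p = (LINT y|lborel_01. y ^ p * (1 - y ^ D) ^ n)"

lemma integrable_beta_moment: "integrable lborel_01 (\<lambda>y. y ^ p * (1 - y ^ D) ^ n)"
  by (intro integrable_lborel_01_continuous continuous_intros)

lemma beta_moment_nonneg: "beta_moment D n p \<ge> 0"
  unfolding beta_moment_def
  by (rule integral_nonneg_AE) (auto simp: space_restrict_space power_le_one)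

lemma beta_moment_Suc: "beta_moment D (Suc n) p = beta_moment D n p - beta_moment D n (p + D)"
proof -
  have "y ^ p * (1 - y ^ D) ^ Suc n = y ^ p * (1 - y ^ D) ^ n - y ^ (p + D) * (1 - y ^ D) ^ n"
    for y :: real
    by (simp add: power_add algebra_simps)
  then show ?thesis
    unfolding beta_moment_def by (simp add: integrable_beta_moment)
qed

lemma pochhammer_inverse_diff:
  fixes a :: real
  assumes "a > 0"
  shows "1 / pochhammer a (Suc n) - 1 / pochhammer (a + 1) (Suc n)
    = real (Suc n) / pochhammer a (Suc (Suc n))"
proof -
  let ?P = "pochhammer a (Suc n)" and ?Q = "pochhammer (a + 1) (Suc n)"
    and ?R = "pochhammer a (Suc (Suc n))"
  have R: "?R = a * ?Q" "?R = (a + real (Suc n)) * ?P"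
    by (rule pochhammer_rec, rule pochhammer_rec')
  have "?P > 0" "?Q > 0"
    using assms by (auto intro: pochhammer_pos)
  have "1 / ?P = (a + real (Suc n)) / ?R"
    unfolding R(2) using \<open>?P > 0\<close> assms by simp
  moreover have "1 / ?Q = a / ?R"
    unfolding R(1) using \<open>?Q > 0\<close> assms by simp
  ultimately show ?thesis
    by (simp add: diff_divide_distrib[symmetric])
qed

lemma beta_moment_eq:
  assumes "D > 0"
  shows "beta_moment D n p = fact n / (real D * pochhammer ((real p + 1) / real D) (Suc n))"
proof (induction n arbitrary: p)
  case 0
  show ?case
    using assms by (simp add: beta_moment_def integral_lborel_01_power)
next
  case (Suc n)
  let ?a = "(real p + 1) / real D"
  have a: "?a > 0" using assms by simp
  have shift: "(real (p + D) + 1) / real D = ?a + 1"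
    using assms by (simp add: field_simps)
  have "beta_moment D (Suc n) p
      = fact n / (real D * pochhammer ?a (Suc n)) - fact n / (real D * pochhammer (?a + 1) (Suc n))"
    by (simp only: beta_moment_Suc Suc.IH shift)
  also have "\<dots> = fact n / real D * (1 / pochhammer ?a (Suc n) - 1 / pochhammer (?a + 1) (Suc n))"
    by (simp add: right_diff_distrib)
  also have "\<dots> = fact (Suc n) / (real D * pochhammer ?a (Suc (Suc n)))"
    by (simp add: pochhammer_inverse_diff[OF a])
  finally show ?case .
qed

abbreviation unit_cube :: "'i set \<Rightarrow> ('i \<Rightarrow> real) measure" where
  "unit_cube I \<equiv> Pi\<^sub>M I (\<lambda>_. lborel_01)"

lemma product_sigma_finite_lborel_01: "product_sigma_finite (\<lambda>i. lborel_01)"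
proof -
  have "finite_measure lborel_01"
    by (rule finite_measureI) (simp add: emeasure_restrict_space space_restrict_space)
  then show ?thesis
    unfolding product_sigma_finite_def using finite_measure.axioms(1) by blast
qed

lemma space_unit_cube: "space (unit_cube I) = PiE I (\<lambda>_. {0..1})"
  by (simp add: space_PiM space_restrict_space)

lemma weight_mult_prod_power:
  "weight D n I x * (\<Prod>i\<in>I. x i) ^ k = (\<Prod>i\<in>I. x i ^ (D * n + k) * (1 - x i ^ D) ^ n)"
  by (simp add: weight_def prod_power_distrib power_add mult_ac flip: prod.distrib)

lemma integrable_weight_mult_prod_power:
  "finite I \<Longrightarrow> integrable (unit_cube I) (\<lambda>x. weight D n I x * (\<Prod>i\<in>I. x i) ^ k)"
  unfolding weight_mult_prod_power
  by (rule product_sigma_finite.product_integrable_prod[OF product_sigma_finite_lborel_01])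
    (auto intro: integrable_beta_moment)

lemma integral_weight_mult_prod_power:
  "finite I \<Longrightarrow>
    (LINT x|unit_cube I. weight D n I x * (\<Prod>i\<in>I. x i) ^ k) = beta_moment D n (D * n + k) ^ card I"
  unfolding weight_mult_prod_power
  by (subst product_sigma_finite.product_integral_prod[OF product_sigma_finite_lborel_01])
    (auto intro: integrable_beta_moment simp: beta_moment_def)

lemma weight_mult_prod_power_nonneg:
  "x \<in> space (unit_cube I) \<Longrightarrow> 0 \<le> weight D n I x * (\<Prod>i\<in>I. x i) ^ k"
  unfolding weight_mult_prod_power
  by (intro prod_nonneg) (auto simp: space_unit_cube PiE_iff power_le_one)

lemma prod_unit_interval_le:
  fixes x :: "'i \<Rightarrow> real"
  assumes "finite I" "i \<in> I" "\<And>j. j \<in> I \<Longrightarrow> x j \<in> {0..1}"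
  shows "(\<Prod>j\<in>I. x j) \<le> x i"
proof -
  have "(\<Prod>j\<in>I. x j) = x i * (\<Prod>j\<in>I - {i}. x j)"
    using assms by (simp add: prod.remove)
  also have "\<dots> \<le> x i"
    using assms by (intro mult_left_le prod_le_1) auto
  finally show ?thesis .
qed

text \<open>Where the weight does not vanish every coordinate is below 1 (this needs \<open>n > 0\<close>),
  so the product stays below 1 and the series converges.\<close>
lemma weight_kernel_sums:
  fixes w :: complex
  assumes I: "finite I" "I \<noteq> {}" and "n > 0" and w: "norm w \<le> 1"
    and x: "x \<in> space (unit_cube I)"
  shows "(\<lambda>k. of_nat ((k + N) choose N) * w ^ k * of_real (weight D n I x * (\<Prod>i\<in>I. x i) ^ k))
    sums (of_real (weight D n I x) / (1 - w * of_real (\<Prod>i\<in>I. x i)) ^ Suc N)"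
proof (cases "weight D n I x = 0")
  case True
  then show ?thesis by simp
next
  case False
  have x01: "x i \<in> {0..1}" if "i \<in> I" for i
    using x that by (auto simp: space_unit_cube)
  have x1: "x i < 1" if "i \<in> I" for i
  proof -
    have "x i \<noteq> 1"
    proof
      assume "x i = 1"
      then have "weight D n I x = 0"
        unfolding weight_def using I(1) that \<open>n > 0\<close> by (auto intro!: prod_zero bexI[of _ i])
      with False show False ..
    qed
    then show ?thesis using x01[OF that] by simp
  qed
  obtain i where "i \<in> I" using I by auto
  let ?p = "\<Prod>i\<in>I. x i"
  have "?p \<le> x i"
    by (rule prod_unit_interval_le[OF I(1) \<open>i \<in> I\<close>]) (rule x01)
  then have "0 \<le> ?p" "?p < 1"
    using x01 x1[OF \<open>i \<in> I\<close>] by (auto intro: prod_nonneg)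
  moreover have "norm w * ?p \<le> ?p"
    using w \<open>0 \<le> ?p\<close> by (simp add: mult_left_le_one_le)
  ultimately have "norm (w * of_real ?p) < 1"
    by (simp add: norm_mult del: of_real_prod)
  from sums_mult[OF negative_binomial_sums[OF this, of N], of "of_real (weight D n I x)"]
  show ?thesis
    by (simp add: power_mult_distrib mult_ac)
qed

lemma summable_norm_weight_kernel:
  fixes w :: complex
  assumes I: "finite I" "I \<noteq> {}" and "n > 0" and "norm w \<le> 1"
    and x: "x \<in> space (unit_cube I)"
  shows "summable (\<lambda>k. real ((k + N) choose N) * norm w ^ k * (weight D n I x * (\<Prod>i\<in>I. x i) ^ k))"
proof -
  have "norm (complex_of_real (norm w)) \<le> 1" using \<open>norm w \<le> 1\<close> by simp
  from sums_summable[OF weight_kernel_sums[OF I \<open>n > 0\<close> this x, where N = N and D = D]]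
  have "summable (\<lambda>k. complex_of_real
      (real ((k + N) choose N) * norm w ^ k * (weight D n I x * (\<Prod>i\<in>I. x i) ^ k)))"
    by (simp only: of_real_mult of_real_power of_real_of_nat_eq)
  then show ?thesis by (simp only: summable_complex_of_real)
qed

lemma weight_kernel_integral:
  fixes w :: complex
  assumes I: "finite I" "I \<noteq> {}" and n: "n > 0" and w: "norm w \<le> 1"
    and summable: "summable (\<lambda>k. real ((k + N) choose N) * beta_moment D n (D * n + k) ^ card I)"
  defines "F \<equiv> \<lambda>x. of_real (weight D n I x) / (1 - w * of_real (\<Prod>i\<in>I. x i)) ^ Suc N"
  shows "integrable (unit_cube I) F"
    and "(\<lambda>k. of_nat ((k + N) choose N) * w ^ k * of_real (beta_moment D n (D * n + k) ^ card I))
      sums (LINT x|unit_cube I. F x)"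
proof -
  define f where
    "f k x = of_nat ((k + N) choose N) * w ^ k * of_real (weight D n I x * (\<Prod>i\<in>I. x i) ^ k)"
    for k x
  have F_eq: "F x = (\<Sum>k. f k x)" if "x \<in> space (unit_cube I)" for x
    using weight_kernel_sums[OF I n w that] unfolding f_def F_def by (simp add: sums_iff)
  have norm_f: "norm (f k x) = real ((k + N) choose N) * norm w ^ k * (weight D n I x * (\<Prod>i\<in>I. x i) ^ k)"
    if "x \<in> space (unit_cube I)" for k x
    unfolding f_def using weight_mult_prod_power_nonneg[OF that]
    by (simp add: norm_mult norm_power del: of_real_mult)
  have norm_f_summable: "summable (\<lambda>k. norm (f k x))" if "x \<in> space (unit_cube I)" for x
    unfolding norm_f[OF that] by (rule summable_norm_weight_kernel[OF I n w that])
  have f_integrable: "integrable (unit_cube I) (f k)" for k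
    unfolding f_def by (intro integrable_mult_right integrable_of_real integrable_weight_mult_prod_power I(1))
  have f_integral: "(LINT x|unit_cube I. f k x)
      = of_nat ((k + N) choose N) * w ^ k * of_real (beta_moment D n (D * n + k) ^ card I)" for k
    unfolding f_def
    by (simp only: integral_mult_right_zero integral_complex_of_real integral_weight_mult_prod_power[OF I(1)])
  have norm_integral_summable: "summable (\<lambda>k. LINT x|unit_cube I. norm (f k x))"
  proof (rule summable_comparison_test'[OF summable])
    fix k
    have "(LINT x|unit_cube I. norm (f k x))
        = (LINT x|unit_cube I. real ((k + N) choose N) * norm w ^ k * (weight D n I x * (\<Prod>i\<in>I. x i) ^ k))"
      by (rule Bochner_Integration.integral_cong) (simp_all add: norm_f)
    also have "\<dots> = real ((k + N) choose N) * norm w ^ k * beta_moment D n (D * n + k) ^ card I"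
      by (simp only: integral_mult_right_zero integral_weight_mult_prod_power[OF I(1)])
    also have "\<dots> = norm w ^ k * (real ((k + N) choose N) * beta_moment D n (D * n + k) ^ card I)"
      by (simp only: mult_ac)
    moreover have "norm w ^ k \<le> 1"
      using w by (simp add: power_le_one)
    ultimately show "norm (LINT x|unit_cube I. norm (f k x))
        \<le> real ((k + N) choose N) * beta_moment D n (D * n + k) ^ card I"
      by (simp add: mult_left_le_one_le beta_moment_nonneg)
  qed
  note suminf_rules = f_integrable AE_I2[OF norm_f_summable] norm_integral_summable
  have "integrable (unit_cube I) F \<longleftrightarrow> integrable (unit_cube I) (\<lambda>x. \<Sum>k. f k x)"
    by (rule Bochner_Integration.integrable_cong) (simp_all add: F_eq)
  then show "integrable (unit_cube I) F"
    using integrable_suminf[OF suminf_rules] by simp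
  have "(LINT x|unit_cube I. F x) = (\<Sum>k. LINT x|unit_cube I. f k x)"
    using integral_suminf[OF suminf_rules] by (simp add: F_eq cong: Bochner_Integration.integral_cong)
  moreover have "summable (\<lambda>k. LINT x|unit_cube I. f k x)"
    by (rule summable_norm_cancel, rule summable_comparison_test'[OF norm_integral_summable]) simp
  ultimately show "(\<lambda>k. of_nat ((k + N) choose N) * w ^ k * of_real (beta_moment D n (D * n + k) ^ card I))
      sums (LINT x|unit_cube I. F x)"
    by (simp add: sums_iff f_integral)
qed

lemma prod_atLeast0AtMost_eq_pochhammer: "(\<Prod>l\<in>{0..m}. t + real l) = pochhammer t (Suc m)"
  by (simp only: pochhammer_prod atLeastLessThanSuc_atLeastAtMost)

lemma R_fun_at_lattice:
  assumes D: "D > 0"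
  shows "R_fun s D n (real n + real (Suc k) / real D)
    = real D ^ (3 * D * n) * fact n ^ (s + 1 - 3 * D)
      * (pochhammer (real k + 1) (3 * D * n + 1) / real D ^ (3 * D * n + 1))
      / pochhammer (real n + real (Suc k) / real D) (Suc n) ^ (s + 1)"
proof -
  let ?t = "real n + real (Suc k) / real D"
  have "(\<Prod>l\<in>{0..3 * D * n}. ?t - real n + real l / real D)
      = (\<Prod>l\<in>{0..3 * D * n}. (real k + 1 + real l) / real D)"
    by (intro prod.cong refl) (simp add: add_divide_distrib)
  also have "\<dots> = pochhammer (real k + 1) (3 * D * n + 1) / real D ^ (3 * D * n + 1)"
    unfolding prod_dividef prod_atLeast0AtMost_eq_pochhammer by simp
  finally have numerator: "(\<Prod>l\<in>{0..3 * D * n}. ?t - real n + real l / real D)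
      = pochhammer (real k + 1) (3 * D * n + 1) / real D ^ (3 * D * n + 1)" .
  show ?thesis
    unfolding R_fun_def numerator prod_power_distrib[symmetric] prod_atLeast0AtMost_eq_pochhammer ..
qed

definition r_star_coeff :: "nat \<Rightarrow> nat \<Rightarrow> nat \<Rightarrow> nat \<Rightarrow> real" where
  "r_star_coeff s D n k =
     real ((k + (3 * D * n + 1)) choose (3 * D * n + 1)) * beta_moment D n (D * n + k) ^ (s + 1)"

text \<open>This is where \<open>s + 1 \<ge> 3D\<close> enters: otherwise the exponent \<open>s + 1 - 3D\<close> in \<open>R\<^sub>n\<close>
  is truncated to 0.\<close>
lemma R_fun_eq_r_star_coeff:
  assumes D: "D > 0" and s: "3 * D \<le> s + 1"
  shows "real D ^ s * fact (3 * D * n + 1) / fact n ^ (3 * D) * r_star_coeff s D n k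
    = R_fun s D n (real n + real (Suc k) / real D)"
proof -
  define N where "N = 3 * D * n + 1"
  define P where "P = pochhammer (real n + real (Suc k) / real D) (Suc n)"
  define Q where "Q = pochhammer (real k + 1) N"
  have "P > 0" unfolding P_def using D by (intro pochhammer_pos add_nonneg_pos) simp_all
  have "(real (D * n + k) + 1) / real D = real n + real (Suc k) / real D"
    using D by (simp add: field_simps)
  then have "beta_moment D n (D * n + k) = fact n / (real D * P)"
    unfolding P_def by (simp add: beta_moment_eq[OF D])
  moreover have "real ((k + N) choose N) = Q / fact N"
    unfolding Q_def by (simp add: binomial_gbinomial gbinomial_pochhammer')
  ultimately have "real D ^ s * fact N / fact n ^ (3 * D) * r_star_coeff s D n k
      = real D ^ s * fact N / fact n ^ (3 * D) * (Q / fact N)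
        * (fact n ^ (s + 1) / (real D ^ (s + 1) * P ^ (s + 1)))"
    unfolding r_star_coeff_def N_def[symmetric] by (simp add: power_divide power_mult_distrib)
  also have "fact n ^ (s + 1) = fact n ^ (s + 1 - 3 * D) * (fact n ^ (3 * D) :: real)"
    using s by (simp flip: power_add)
  also have "real D ^ s * fact N / fact n ^ (3 * D) * (Q / fact N)
      * (fact n ^ (s + 1 - 3 * D) * fact n ^ (3 * D) / (real D ^ (s + 1) * P ^ (s + 1)))
    = real D ^ (3 * D * n) * fact n ^ (s + 1 - 3 * D) * (Q / real D ^ N) / P ^ (s + 1)"
  proof -
    have "real D ^ N = real D * real D ^ (3 * D * n)"
      unfolding N_def by simp
    then show ?thesis
      using \<open>P > 0\<close> D by (simp add: field_simps)
  qed
  also have "\<dots> = R_fun s D n (real n + real (Suc k) / real D)"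
    unfolding R_fun_at_lattice[OF D] P_def Q_def N_def ..
  finally show ?thesis
    unfolding N_def .
qed

lemma R_fun_bound:
  assumes D: "D > 0" and s: "3 * D \<le> s + 1" and t: "real n \<le> t" "1 \<le> t"
  shows "0 \<le> R_fun s D n t"
    and "R_fun s D n t \<le> real D ^ (3 * D * n) * fact n ^ (s + 1 - 3 * D) * 4 ^ (3 * D * n + 1) / t\<^sup>2"
proof -
  define K where "K = real D ^ (3 * D * n) * fact n ^ (s + 1 - 3 * D)"
  define num where "num = (\<Prod>l\<in>{0..3 * D * n}. t - real n + real l / real D)"
  define den where "den = (\<Prod>l\<in>{0..n}. (t + real l) ^ (s + 1))"
  have R: "R_fun s D n t = K * num / den"
    unfolding R_fun_def K_def num_def den_def ..
  have K: "0 \<le> K" unfolding K_def by simp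
  have factor: "0 \<le> t - real n + real l / real D \<and> t - real n + real l / real D \<le> 4 * t"
    if "l \<le> 3 * D * n" for l
  proof -
    have "real l / real D \<le> real (3 * D * n) / real D"
      using that by (intro divide_right_mono) (auto simp flip: of_nat_mult)
    also have "\<dots> = 3 * real n" using D by simp
    finally show ?thesis using t by simp
  qed
  have num: "0 \<le> num" "num \<le> (4 * t) ^ (3 * D * n + 1)"
    unfolding num_def using factor prod_mono[of "{0..3 * D * n}" _ "\<lambda>_. 4 * t"]
    by (auto intro: prod_nonneg)
  have "3 * D * (n + 1) \<le> (s + 1) * (n + 1)"
    using s by (intro mult_right_mono) auto
  then have "t ^ (3 * D * n + 1 + 2) \<le> t ^ ((s + 1) * (n + 1))"
    using t D by (intro power_increasing) (auto simp: algebra_simps)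
  also have "\<dots> = (\<Prod>l\<in>{0..n}. t ^ (s + 1))"
    by (subst power_mult) simp
  also have "\<dots> \<le> den"
    unfolding den_def using t by (intro prod_mono conjI power_mono) auto
  finally have den: "t ^ (3 * D * n + 1 + 2) \<le> den" .
  have t_pow: "0 < t ^ (3 * D * n + 1 + 2)" using t by simp
  show "0 \<le> R_fun s D n t"
    unfolding R using K num den t_pow by simp
  have "K * num / den \<le> K * (4 * t) ^ (3 * D * n + 1) / t ^ (3 * D * n + 1 + 2)"
    using K num den t_pow t by (intro frac_le mult_left_mono mult_nonneg_nonneg) auto
  also have "\<dots> = K * 4 ^ (3 * D * n + 1) / t\<^sup>2"
    using t by (simp add: power_add power_mult_distrib power2_eq_square)
  finally show "R_fun s D n t \<le> real D ^ (3 * D * n) * fact n ^ (s + 1 - 3 * D) * 4 ^ (3 * D * n + 1) / t\<^sup>2"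
    unfolding R K_def .
qed

lemma summable_R_fun:
  assumes D: "D > 0" and s: "3 * D \<le> s + 1" and n: "n > 0"
    and t: "\<And>k. real (Suc k) \<le> real D * (t k - real n)"
  shows "summable (\<lambda>k. R_fun s D n (t k))"
proof -
  define B where "B = real D ^ (3 * D * n) * fact n ^ (s + 1 - 3 * D) * 4 ^ (3 * D * n + 1)"
  have "summable (\<lambda>k. inverse (real (Suc k) ^ 2))"
    using summable_Suc_iff[of "\<lambda>k. inverse (real k ^ 2)"] inverse_power_summable[of 2] by simp
  then have "summable (\<lambda>k. B * real D ^ 2 * inverse (real (Suc k) ^ 2))"
    by (rule summable_mult)
  then show ?thesis
  proof (rule summable_comparison_test')
    fix k
    have "real (Suc k) / real D \<le> t k - real n"
      using t[of k] D by (simp add: field_simps)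
    moreover have "0 < real (Suc k) / real D" "1 \<le> real n"
      using n D by auto
    ultimately have tk: "real (Suc k) / real D \<le> t k" "real n \<le> t k" "1 \<le> t k"
      by linarith+
    have "norm (R_fun s D n (t k)) \<le> B / (t k)\<^sup>2"
      using R_fun_bound[OF D s tk(2,3)] unfolding B_def by simp
    also have "\<dots> \<le> B / (real (Suc k) / real D)\<^sup>2"
      using tk D by (intro divide_left_mono power_mono) (auto simp: B_def)
    also have "\<dots> = B * real D ^ 2 * inverse (real (Suc k) ^ 2)"
      by (simp add: field_simps)
    finally show "norm (R_fun s D n (t k)) \<le> B * real D ^ 2 * inverse (real (Suc k) ^ 2)" .
  qed
qed

lemma summable_r_star_coeff:
  assumes D: "D > 0" and s: "3 * D \<le> s + 1" and n: "n > 0"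
  shows "summable (r_star_coeff s D n)"
proof -
  define c where "c = real D ^ s * fact (3 * D * n + 1) / fact n ^ (3 * D)"
  have "c > 0" unfolding c_def using D by (intro divide_pos_pos mult_pos_pos zero_less_power fact_gt_zero) simp
  have "summable (\<lambda>k. R_fun s D n (real n + real (Suc k) / real D))"
    by (rule summable_R_fun[OF D s n]) (use D in simp)
  then have "summable (\<lambda>k. R_fun s D n (real n + real (Suc k) / real D) / c)"
    by (rule summable_divide)
  moreover have eq: "R_fun s D n (real n + real (Suc k) / real D) / c = r_star_coeff s D n k" for k
    using R_fun_eq_r_star_coeff[OF D s, of n k] \<open>c > 0\<close> unfolding c_def[symmetric] by (simp add: field_simps)
  ultimately show ?thesis by (simp only: eq)
qed

lemma primitive_root_power_eq_1_iff:
  fixes \<xi> :: "'a::monoid_mult"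
  assumes "D > 0" "\<xi> ^ D = 1" "\<forall>k. 0 < k \<and> k < D \<longrightarrow> \<xi> ^ k \<noteq> 1"
  shows "\<xi> ^ e = 1 \<longleftrightarrow> D dvd e"
proof -
  have "\<xi> ^ e = \<xi> ^ (e mod D)"
    using assms(2) by (metis div_mult_mod_eq mult.commute power_add power_mult power_one mult_1)
  then show ?thesis
    using assms by (metis dvd_eq_mod_eq_0 mod_less_divisor neq0_conv power_0)
qed

lemma primitive_root_power_eq_iff:
  fixes \<xi> :: "'a::field"
  assumes D: "D > 0" "\<xi> ^ D = 1" "\<forall>k. 0 < k \<and> k < D \<longrightarrow> \<xi> ^ k \<noteq> 1"
  shows "\<xi> ^ a = \<xi> ^ b \<longleftrightarrow> a mod D = b mod D"
proof -
  have "\<xi> \<noteq> 0" using D by (metis power_0_left zero_neq_one neq0_conv)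
  have main: "\<xi> ^ a = \<xi> ^ b \<longleftrightarrow> a mod D = b mod D" if "a \<le> b" for a b
  proof -
    have "\<xi> ^ a = \<xi> ^ b \<longleftrightarrow> \<xi> ^ (b - a) = 1"
      using that \<open>\<xi> \<noteq> 0\<close> by (metis (no_types) le_add_diff_inverse mult_cancel_left1 power_add power_eq_0_iff)
    also have "\<dots> \<longleftrightarrow> D dvd (b - a)"
      by (rule primitive_root_power_eq_1_iff[OF D])
    also have "\<dots> \<longleftrightarrow> a mod D = b mod D"
      using mod_eq_dvd_iff_nat[OF that, of D] by auto
    finally show ?thesis .
  qed
  show ?thesis
    using main[of a b] main[of b a] by (cases "a \<le> b") auto
qed

lemma sum_power_root_of_unity:
  fixes c :: "'a::field"
  assumes "c ^ D = 1"
  shows "(\<Sum>m=1..D. c ^ m) = (if c = 1 then of_nat D else 0)"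
proof -
  have "(\<Sum>m=1..D. c ^ m) = c * (\<Sum>m<D. c ^ m)"
    by (simp add: sum.atLeast1_atMost_eq sum_distrib_left)
  then show ?thesis
    using assms by (simp add: sum_gp_strict)
qed

lemma sum_primitive_root_filter:
  fixes \<xi> :: "'a::field"
  assumes D: "D > 0" "\<xi> ^ D = 1" "\<forall>k. 0 < k \<and> k < D \<longrightarrow> \<xi> ^ k \<noteq> 1" and j: "j \<in> {1..D}"
  shows "(\<Sum>m=1..D. inverse \<xi> ^ (m * j) * (\<xi> ^ m) ^ Suc k) = (if k mod D = j - 1 then of_nat D else 0)"
proof -
  define c where "c = \<xi> ^ Suc k * inverse \<xi> ^ j"
  have "inverse \<xi> ^ (m * j) * (\<xi> ^ m) ^ Suc k = c ^ m" for m
    unfolding c_def by (simp add: power_mult_distrib flip: power_mult) (simp add: mult.commute)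
  moreover have "c ^ D = 1"
    unfolding c_def using D(2)
    by (simp add: power_mult_distrib power_inverse flip: power_mult) (simp add: power_mult mult.commute)
  moreover have "c = 1 \<longleftrightarrow> k mod D = j - 1"
  proof -
    have "\<xi> \<noteq> 0" using D by (metis power_0_left zero_neq_one neq0_conv)
    then have "c = 1 \<longleftrightarrow> \<xi> ^ Suc k = \<xi> ^ j"
      unfolding c_def by (simp add: field_simps del: power_Suc)
    also have "\<dots> \<longleftrightarrow> Suc k mod D = j mod D"
      by (rule primitive_root_power_eq_iff[OF D])
    also have "\<dots> \<longleftrightarrow> k mod D = j - 1"
      using j by (cases "j = D") (auto simp: mod_Suc)
    finally show ?thesis .
  qed
  ultimately show ?thesis
    using sum_power_root_of_unity[of c D] by simp
qed

lemma R_fun_eq_0: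
  assumes D: "D > 0" and m: "1 \<le> m" "m < n" and j: "j \<in> {1..D}"
  shows "R_fun s D n (real m + real j / real D) = 0"
proof -
  define l where "l = D * (n - m) - j"
  have "1 \<le> n - m" "n - m \<le> 3 * n"
    using m by linarith+
  then have "D \<le> D * (n - m)" "D * (n - m) \<le> 3 * D * n"
    using mult_le_mono2[of 1 "n - m" D] mult_le_mono2[of "n - m" "3 * n" D] by (simp_all add: mult_ac)
  then have "j \<le> D * (n - m)"
    using j by (meson atLeastAtMost_iff le_trans)
  moreover have "D * (n - m) - j \<le> 3 * D * n"
    using \<open>D * (n - m) \<le> 3 * D * n\<close> by (rule le_trans[OF diff_le_self])
  ultimately have "l \<in> {0..3 * D * n}" "real l = real D * (real n - real m) - real j"
    unfolding l_def using m by auto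
  moreover have "real m + real j / real D - real n + (real D * (real n - real m) - real j) / real D = 0"
    using D by (simp add: field_simps)
  ultimately show ?thesis
    unfolding R_fun_def by (auto intro!: prod_zero bexI[of _ l])
qed

text \<open>No summability hypothesis is needed: the two series have exactly the same sums,
  and \<^const>\<open>suminf\<close> is defined from \<^const>\<open>sums\<close>.\<close>
lemma r_lin_eq_suminf:
  assumes D: "D > 0" and n: "n > 0" and j: "j \<in> {1..D}"
  shows "r_lin s D n j = (\<Sum>q. R_fun s D n (real (q + n) + real j / real D))"
proof -
  let ?f = "\<lambda>m. R_fun s D n (real (Suc m) + real j / real D)"
  have shift: "(\<lambda>q. R_fun s D n (real (q + n) + real j / real D)) = (\<lambda>q. ?f (q + (n - 1)))"
    using n by (simp add: Suc_diff_le)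
  have "(\<lambda>q. ?f (q + (n - 1))) sums X \<longleftrightarrow> ?f sums X" for X
  proof (rule sums_mono_reindex)
    fix m assume m: "m \<notin> range (\<lambda>q. q + (n - 1))"
    have "\<not> n - 1 \<le> m"
    proof
      assume "n - 1 \<le> m"
      then have "m = (m - (n - 1)) + (n - 1)" by simp
      with m show False by blast
    qed
    then have "Suc m < n" by linarith
    then show "?f m = 0" using R_fun_eq_0[OF D _ _ j, where m = "Suc m"] by simp
  qed (simp add: strict_mono_def)
  then have "(sums) (\<lambda>q. R_fun s D n (real (q + n) + real j / real D)) = (sums) ?f"
    unfolding shift by (intro ext)
  then show ?thesis
    unfolding r_lin_def suminf_def by simp
qed

lemma sums_residue_class_iff:
  assumes "D > 0" "r < D" and zero: "\<And>k. k mod D \<noteq> r \<Longrightarrow> f k = 0"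
  shows "(\<lambda>q. f (D * q + r)) sums S \<longleftrightarrow> f sums S"
proof (rule sums_mono_reindex)
  show "strict_mono (\<lambda>q. D * q + r)" using \<open>D > 0\<close> by (intro strict_monoI) simp
  fix k assume "k \<notin> range (\<lambda>q. D * q + r)"
  then have "k \<noteq> D * (k div D) + r" by blast
  then have "k mod D \<noteq> r" by (metis mult_div_mod_eq)
  then show "f k = 0" by (rule zero)
qed

lemma r_lin_sums:
  assumes D: "D > 0" and s: "3 * D \<le> s + 1" and n: "n > 0" and j: "j \<in> {1..D}"
  shows "(\<lambda>q. R_fun s D n (real (q + n) + real j / real D)) sums r_lin s D n j"
  unfolding r_lin_eq_suminf[OF D n j]
proof (rule summable_sums, rule summable_R_fun[OF D s n])
  fix q
  have "q \<le> D * q" "1 \<le> j" using D j by simp_all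
  then have "Suc q \<le> D * q + j" by linarith
  then have "real (Suc q) \<le> real D * real q + real j"
    by (simp only: of_nat_mult[symmetric] of_nat_add[symmetric] of_nat_le_iff)
  also have "\<dots> = real D * (real (q + n) + real j / real D - real n)"
    using D by (simp add: field_simps)
  finally show "real (Suc q) \<le> real D * (real (q + n) + real j / real D - real n)" .
qed

lemma r_star_sums:
  fixes \<xi> :: complex
  assumes D: "D > 0" and s: "3 * D \<le> s + 1" and n: "n > 0" and "\<xi> ^ D = 1"
  shows "(\<lambda>k. of_real (r_star_coeff s D n k) * (\<xi> ^ m) ^ Suc k) sums r_star s D n \<xi> m"
proof -
  have "norm (\<xi> ^ m) \<le> 1"
    using power_eq_1_iff[OF \<open>\<xi> ^ D = 1\<close>] D by (simp add: norm_power)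
  then have "(\<lambda>k. of_nat ((k + (3 * D * n + 1)) choose (3 * D * n + 1)) * (\<xi> ^ m) ^ k
      * of_real (beta_moment D n (D * n + k) ^ card {..s}))
    sums (LINT x|unit_cube {..s}. of_real (weight D n {..s} x)
      / (1 - \<xi> ^ m * of_real (\<Prod>i\<in>{..s}. x i)) ^ Suc (3 * D * n + 1))"
    using summable_r_star_coeff[OF D s n] unfolding r_star_coeff_def[abs_def]
    by (intro weight_kernel_integral(2) n) auto
  from sums_mult[OF this, of "\<xi> ^ m"] show ?thesis
    unfolding r_star_def r_star_coeff_def by (simp add: mult_ac)
qed

lemma r_star_filter_sums:
  fixes \<xi> :: complex
  assumes D: "D > 0" and s: "3 * D \<le> s + 1" and n: "n > 0"
    and \<xi>: "\<xi> ^ D = 1" "\<forall>k. 0 < k \<and> k < D \<longrightarrow> \<xi> ^ k \<noteq> 1" and j: "j \<in> {1..D}"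
  shows "(\<lambda>k. (if k mod D = j - 1 then of_nat D else 0) * of_real (r_star_coeff s D n k))
    sums (\<Sum>m=1..D. inverse \<xi> ^ (m * j) * r_star s D n \<xi> m)"
proof -
  have "(\<lambda>k. \<Sum>m=1..D. inverse \<xi> ^ (m * j) * (of_real (r_star_coeff s D n k) * (\<xi> ^ m) ^ Suc k))
    sums (\<Sum>m=1..D. inverse \<xi> ^ (m * j) * r_star s D n \<xi> m)"
    by (intro sums_sum sums_mult r_star_sums[OF D s n \<xi>(1)])
  moreover have "(\<Sum>m=1..D. inverse \<xi> ^ (m * j) * (of_real (r_star_coeff s D n k) * (\<xi> ^ m) ^ Suc k))
      = (\<Sum>m=1..D. inverse \<xi> ^ (m * j) * (\<xi> ^ m) ^ Suc k) * of_real (r_star_coeff s D n k)" for k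
    unfolding sum_distrib_right by (intro sum.cong refl) (simp only: mult_ac)
  ultimately show ?thesis
    by (simp only: sum_primitive_root_filter[OF D \<xi> j])
qed

lemma r_lin_eq_sum_r_star:
  fixes \<xi> :: complex
  assumes D: "D > 0" and "s > 0" and s: "3 * D \<le> s + 1" and n: "n > 0"
    and \<xi>: "\<xi> ^ D = 1" "\<forall>k. 0 < k \<and> k < D \<longrightarrow> \<xi> ^ k \<noteq> 1" and j: "j \<in> {1..D}"
  shows "complex_of_real (r_lin s D n j) =
    complex_of_real (real D ^ (s - 1) * fact (3 * D * n + 1) / fact n ^ (3 * D))
      * (\<Sum>m=1..D. inverse \<xi> ^ (m * j) * r_star s D n \<xi> m)"
proof -
  define c where "c = real D ^ (s - 1) * fact (3 * D * n + 1) / fact n ^ (3 * D)"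
  define S where "S = (\<Sum>m=1..D. inverse \<xi> ^ (m * j) * r_star s D n \<xi> m)"
  define f where "f k = (if k mod D = j - 1 then of_nat D else 0) * complex_of_real (r_star_coeff s D n k)"
    for k
  have "j - 1 < D" using j by auto
  have "f sums S"
    unfolding f_def S_def by (rule r_star_filter_sums[OF D s n \<xi> j])
  then have "(\<lambda>q. f (D * q + (j - 1))) sums S"
    using sums_residue_class_iff[OF D \<open>j - 1 < D\<close>, of f] by (simp add: f_def)
  then have "(\<lambda>q. complex_of_real c * f (D * q + (j - 1))) sums (complex_of_real c * S)"
    by (rule sums_mult)
  moreover have "complex_of_real c * f (D * q + (j - 1))
      = complex_of_real (R_fun s D n (real (q + n) + real j / real D))" for q
  proof -
    have "c * real D = real D ^ s * fact (3 * D * n + 1) / fact n ^ (3 * D)"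
      unfolding c_def using \<open>s > 0\<close> by (simp add: power_eq_if)
    have "complex_of_real c * f (D * q + (j - 1))
        = complex_of_real (c * real D * r_star_coeff s D n (D * q + (j - 1)))"
      unfolding f_def using \<open>j - 1 < D\<close> by simp
    also have "c * real D * r_star_coeff s D n (D * q + (j - 1))
        = R_fun s D n (real n + real (Suc (D * q + (j - 1))) / real D)"
      unfolding \<open>c * real D = _\<close> by (rule R_fun_eq_r_star_coeff[OF D s])
    also have "real n + real (Suc (D * q + (j - 1))) / real D = real (q + n) + real j / real D"
      using D j by (simp add: field_simps)
    finally show ?thesis .
  qed
  ultimately have "(\<lambda>q. complex_of_real (R_fun s D n (real (q + n) + real j / real D)))
    sums (complex_of_real c * S)"
    by simp
  from sums_unique2[OF sums_of_real[OF r_lin_sums[OF D s n j]] this]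
  show ?thesis unfolding c_def S_def .
qed

lemma (in product_sigma_finite) product_integral_insert_outer:
  fixes f :: "_ \<Rightarrow> _::{banach, second_countable_topology}"
  assumes J: "finite J" "i \<notin> J" and f: "integrable (Pi\<^sub>M (insert i J) M) f"
  shows "integrable (M i) (\<lambda>t. LINT y|Pi\<^sub>M J M. f (y(i := t)))"
    and "integral\<^sup>L (Pi\<^sub>M (insert i J) M) f = (LINT t|M i. LINT y|Pi\<^sub>M J M. f (y(i := t)))"
proof -
  interpret I: finite_product_sigma_finite M "{i}" by standard simp
  interpret J: finite_product_sigma_finite M J by standard fact
  interpret P: pair_sigma_finite "Pi\<^sub>M {i} M" "Pi\<^sub>M J M" ..
  have disj: "{i} \<inter> J = {}" using J by simp
  have f': "integrable (Pi\<^sub>M ({i} \<union> J) M) f" using f by simp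
  let ?h = "\<lambda>t. LINT y|Pi\<^sub>M J M. f (y(i := t))"
  have merge: "(LINT y|Pi\<^sub>M J M. f (merge {i} J (x, y))) = ?h (x i)" for x
    by (intro Bochner_Integration.integral_cong refl arg_cong[where f = f])
      (auto simp: merge_def space_PiM PiE_def extensional_def)
  have "distr (Pi\<^sub>M {i} M \<Otimes>\<^sub>M Pi\<^sub>M J M) (Pi\<^sub>M ({i} \<union> J) M) (merge {i} J) = Pi\<^sub>M ({i} \<union> J) M"
    by (rule distr_merge[OF disj]) (use J in auto)
  then have "integrable (Pi\<^sub>M {i} M \<Otimes>\<^sub>M Pi\<^sub>M J M) (\<lambda>x. f (merge {i} J x))"
    using f' by (intro integrable_distr[OF measurable_merge]) simp
  from P.integrable_fst'[OF this] have h_int: "integrable (Pi\<^sub>M {i} M) (\<lambda>x. ?h (x i))"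
    by (simp only: merge)
  moreover have "?h \<in> borel_measurable (M i)"
  proof -
    have "(\<lambda>t. \<lambda>k\<in>{i}. t) \<in> measurable (M i) (Pi\<^sub>M {i} M)"
      by (rule measurable_restrict) simp
    from measurable_comp[OF this borel_measurable_integrable[OF h_int]]
    show ?thesis by (simp add: comp_def)
  qed
  ultimately show "integrable (M i) ?h"
    by (subst distr_singleton[of i, symmetric]) (simp add: integrable_distr_eq measurable_component_singleton)
  have "integral\<^sup>L (Pi\<^sub>M (insert i J) M) f = (LINT x|Pi\<^sub>M {i} M. ?h (x i))"
    using product_integral_fold[OF disj _ J(1) f'] by (simp add: merge)
  also have "\<dots> = (LINT t|M i. ?h t)"
    by (rule product_integral_singleton) fact
  finally show "integral\<^sup>L (Pi\<^sub>M (insert i J) M) f = (LINT t|M i. ?h t)" .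
qed

lemma contour_integral_linepath_0:
  fixes G :: "complex \<Rightarrow> complex"
  assumes "integrable lborel_01 (\<lambda>t. G (of_real t * w))"
  shows "contour_integral (linepath 0 w) G = w * (LINT t|lborel_01. G (of_real t * w))"
proof -
  have "((\<lambda>t. G (of_real t * w) * w) has_integral (LINT t|lborel_01. G (of_real t * w)) * w) {0..1}"
    by (rule has_integral_mult_left[OF has_integral_lborel_01[OF assms]])
  moreover have "linepath 0 w t = of_real t * w" for t
    by (simp add: linepath_def scaleR_conv_of_real)
  ultimately have "(G has_contour_integral (LINT t|lborel_01. G (of_real t * w)) * w) (linepath 0 w)"
    by (simp add: has_contour_integral_linepath)
  then show ?thesis
    by (simp add: contour_integral_unique mult.commute)
qed

lemma contour_integrand_eq_cube_integrand:
  fixes w :: complex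
  assumes "w ^ D = 1"
  shows "(of_real t * w) ^ (D * n) * (1 - (of_real t * w) ^ D) ^ n * of_real (weight D n {1..s} y)
      / (1 - of_real t * w * of_real (\<Prod>i\<in>{1..s}. y i)) ^ e
    = of_real (weight D n {..s} (y(0 := t))) / (1 - w * of_real (\<Prod>i\<in>{..s}. (y(0 := t)) i)) ^ e"
proof -
  have cube: "{..s} = insert 0 {1..s}" by auto
  have "weight D n {..s} (y(0 := t)) = t ^ (D * n) * (1 - t ^ D) ^ n * weight D n {1..s} y"
    unfolding cube weight_def by (auto intro!: prod.cong)
  moreover have "(\<Prod>i\<in>{..s}. (y(0 := t)) i) = t * (\<Prod>i\<in>{1..s}. y i)"
    unfolding cube by (auto intro!: prod.cong)
  moreover have "(of_real t * w) ^ D = of_real (t ^ D)" "(of_real t * w) ^ (D * n) = of_real (t ^ (D * n))"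
    using assms by (simp_all add: power_mult_distrib power_mult)
  ultimately show ?thesis
    by (simp add: mult_ac)
qed

lemma r_star_eq_r_star_contour:
  fixes \<xi> :: complex
  assumes D: "D > 0" and s: "3 * D \<le> s + 1" and n: "n > 0" and \<xi>: "\<xi> ^ D = 1"
  shows "r_star s D n \<xi> m = r_star_contour s D n \<xi> m"
proof -
  define w where "w = \<xi> ^ m"
  have "w ^ D = 1" unfolding w_def using \<xi> by (metis power_mult mult.commute power_one)
  then have "norm w \<le> 1" using power_eq_1_iff D by fastforce
  define F where "F x = of_real (weight D n {..s} x) / (1 - w * of_real (\<Prod>i\<in>{..s}. x i)) ^ (3 * D * n + 2)"
    for x
  define G where "G z = (LINT x|unit_cube {1..s}. z ^ (D * n) * (1 - z ^ D) ^ n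
      * complex_of_real (weight D n {1..s} x) / (1 - z * complex_of_real (\<Prod>i\<in>{1..s}. x i)) ^ (3 * D * n + 2))"
    for z
  have "3 * D * n + 2 = Suc (3 * D * n + 1)" by simp
  then have "integrable (unit_cube {..s}) F"
    using summable_r_star_coeff[OF D s n] \<open>norm w \<le> 1\<close> unfolding F_def r_star_coeff_def[abs_def]
    by (simp only:) (intro weight_kernel_integral(1) n, auto)
  moreover have cube: "{..s} = insert 0 {1..s}" by auto
  ultimately have "integrable (unit_cube (insert 0 {1..s})) F" by simp
  note fubini = product_sigma_finite.product_integral_insert_outer[OF
      product_sigma_finite_lborel_01 _ _ this]
  have G_F: "G (of_real t * w) = (LINT y|unit_cube {1..s}. F (y(0 := t)))" for t
    unfolding G_def F_def contour_integrand_eq_cube_integrand[OF \<open>w ^ D = 1\<close>] ..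
  have "r_star s D n \<xi> m = w * (LINT x|unit_cube {..s}. F x)"
    unfolding r_star_def F_def w_def ..
  also have "\<dots> = w * (LINT t|lborel_01. G (of_real t * w))"
    unfolding cube G_F by (subst fubini(2)) simp_all
  also have "\<dots> = r_star_contour s D n \<xi> m"
    unfolding r_star_contour_def G_def[symmetric] w_def[symmetric]
    by (rule contour_integral_linepath_0[symmetric]) (use fubini(1) in \<open>simp_all add: G_F\<close>)
  finally show ?thesis .
qed

theorem theorem1:
  fixes s D n :: nat and \<xi> :: complex
  assumes "D > 0" and "s > 0" and "s + 1 \<ge> 3 * D"
    and "n > 0" and "even n"
    and "\<xi> ^ D = 1" and "\<forall>k. 0 < k \<and> k < D \<longrightarrow> \<xi> ^ k \<noteq> 1"
  shows "\<forall>j\<in>{1..D}.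
      complex_of_real (r_lin s D n j) =
        complex_of_real (real D ^ (s - 1) * fact (3*D*n+1) / fact n ^ (3*D))
        * (\<Sum>m=1..D. inverse \<xi> ^ (m*j) * r_star s D n \<xi> m)
    \<and> (\<forall>m\<in>{1..D}. r_star s D n \<xi> m = r_star_contour s D n \<xi> m)"
  using r_lin_eq_sum_r_star[OF assms(1-4,6,7)] r_star_eq_r_star_contour[OF assms(1,3,4,6)]
  by blast

end
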